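(* Let $X$ be a continuum and $T\subset X$ a thick subcontinuum. Then every null-aposyndetic point of $X$ lies in the boundary $\overline T\cap\overline{X-T}$ of $T$.
   Context: A continuum is a nondegenerate compact connected Hausdorff space. A subcontinuum $T\subset X$ is thick if $T\neq X$ and $T$ has nonempty interior. A point $x\in X$ is null-aposyndetic if no proper subcontinuum of $X$ contains $x$ in its interior. *)

theory Defs
  imports "HOL-Analysis.Analysis"
begin

definition continuum :: "'a topology \<Rightarrow> bool" where
  "continuum X \<longleftrightarrow> compact_space X \<and> connected_space X \<and> Hausdorff_space X
     \<and> (\<exists>a\<in>topspace X. \<exists>b\<in>topspace X. a \<noteq> b)"

definition subcontinuum :: "'a topology \<Rightarrow> 'a set \<Rightarrow> bool" where
  "subcontinuum X T \<longleftrightarrow> T \<subseteq> topspace X \<and> T \<noteq> {} \<and> compactin X T \<and> connectedin X T"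

definition thick :: "'a topology \<Rightarrow> 'a set \<Rightarrow> bool" where
  "thick X T \<longleftrightarrow> subcontinuum X T \<and> T \<noteq> topspace X \<and> X interior_of T \<noteq> {}"

definition null_aposyndetic :: "'a topology \<Rightarrow> 'a \<Rightarrow> bool" where
  "null_aposyndetic X x \<longleftrightarrow> x \<in> topspace X \<and>
     \<not> (\<exists>T. subcontinuum X T \<and> T \<noteq> topspace X \<and> x \<in> X interior_of T)"

end

theory Submission
  imports Defs
begin

text \<open>A null-aposyndetic point \<open>x\<close> is not interior to the proper subcontinuum \<open>T\<close>, so it
  lies in the closure \<open>H\<close> of \<open>X - T\<close>. If \<open>x \<notin> T\<close>, then \<open>x\<close> is interior to \<open>H\<close>, which is
  proper because \<open>T\<close> has interior; so \<open>H\<close> must be disconnected, \<open>H = H\<^sub>1 \<union> H\<^sub>2\<close> with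
  \<open>x \<in> H\<^sub>1\<close>. But then \<open>T \<union> H\<^sub>1\<close> is a subcontinuum containing the neighbourhood \<open>X - H\<^sub>2\<close>
  of \<open>x\<close>, and it is proper since otherwise \<open>H \<subseteq> H\<^sub>1\<close>.\<close>

lemma connectedin_Un_closedin_complement:
  assumes X: "connected_space X" and C: "connectedin X C" "closedin X C"
    and AB: "closedin X A" "closedin X B" "A \<inter> B = {}"
    and cover: "topspace X = C \<union> A \<union> B"
  shows "connectedin X (C \<union> A)"
proof -
  \<comment> \<open>A separating part disjoint from \<open>C\<close> lies in \<open>A\<close>, hence would be clopen in \<open>X\<close>.\<close>
  have no_separation: False
    if G: "closedin X G1" "closedin X G2" "C \<union> A \<subseteq> G1 \<union> G2" "G1 \<inter> G2 \<inter> (C \<union> A) = {}"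
      "G1 \<inter> (C \<union> A) \<noteq> {}" "G2 \<inter> (C \<union> A) \<noteq> {}" "G2 \<inter> C = {}" for G1 G2
  proof -
    have K: "closedin X (C \<union> A)"
      using C(2) AB(1) by (rule closedin_Un)
    have "closedin X (G1 \<inter> (C \<union> A) \<union> B)" "closedin X (G2 \<inter> (C \<union> A))"
      using closedin_Un[OF closedin_Int[OF G(1) K] AB(2)] closedin_Int[OF G(2) K] .
    moreover have "topspace X \<subseteq> (G1 \<inter> (C \<union> A) \<union> B) \<union> G2 \<inter> (C \<union> A)"
      unfolding cover using G(3) by blast
    moreover have "(G1 \<inter> (C \<union> A) \<union> B) \<inter> (G2 \<inter> (C \<union> A)) = {}"
      using G(4,7) AB(3) by blast
    ultimately show False
      using X G(5,6) unfolding connected_space_closedin by blast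
  qed
  show ?thesis
    unfolding connectedin_closedin
  proof (intro conjI notI)
    show "C \<union> A \<subseteq> topspace X"
      using cover by blast
  next
    assume "\<exists>F1 F2. closedin X F1 \<and> closedin X F2 \<and> C \<union> A \<subseteq> F1 \<union> F2 \<and>
              F1 \<inter> F2 \<inter> (C \<union> A) = {} \<and> F1 \<inter> (C \<union> A) \<noteq> {} \<and> F2 \<inter> (C \<union> A) \<noteq> {}"
    then obtain F1 F2 where F: "closedin X F1" "closedin X F2" "C \<union> A \<subseteq> F1 \<union> F2"
        "F1 \<inter> F2 \<inter> (C \<union> A) = {}" "F1 \<inter> (C \<union> A) \<noteq> {}" "F2 \<inter> (C \<union> A) \<noteq> {}"
      by blast
    then have "F1 \<inter> C = {} \<or> F2 \<inter> C = {}"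
      using C(1) unfolding connectedin_closedin by blast
    then show False
      using no_separation[of F1 F2] no_separation[of F2 F1] F by (auto simp: Int_commute Un_commute)
  qed
qed

lemma subcontinuum_closedin:
  "\<lbrakk>compact_space X; closedin X K; connectedin X K; K \<noteq> {}\<rbrakk> \<Longrightarrow> subcontinuum X K"
  by (simp add: subcontinuum_def closedin_compact_space closedin_subset)

lemma null_aposyndetic_in_closure_complement:
  assumes "null_aposyndetic X x" and "subcontinuum X T" and "T \<noteq> topspace X"
  shows "x \<in> X closure_of (topspace X - T)"
  using assms by (auto simp: null_aposyndetic_def interior_of_closure_of)

lemma null_aposyndetic_notin_interior_closedin:
  assumes "compact_space X" and "null_aposyndetic X x"
    and "closedin X K" and "connectedin X K" and "K \<noteq> topspace X"
  shows "x \<notin> X interior_of K"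
proof
  assume x: "x \<in> X interior_of K"
  then have "subcontinuum X K"
    using assms interior_of_subset subcontinuum_closedin by fastforce
  then show False
    using assms(2,5) x by (auto simp: null_aposyndetic_def)
qed

lemma closedin_not_connectedin_split:
  assumes "closedin X H" and "\<not> connectedin X H" and "x \<in> H"
  obtains H1 H2 where "closedin X H1" "closedin X H2" "H = H1 \<union> H2" "H1 \<inter> H2 = {}"
    "x \<in> H1" "H2 \<noteq> {}"
proof -
  obtain E1 E2 where E: "closedin X E1" "closedin X E2" "H \<subseteq> E1 \<union> E2"
      "E1 \<inter> E2 \<inter> H = {}" "E1 \<inter> H \<noteq> {}" "E2 \<inter> H \<noteq> {}"
    using assms(2) closedin_subset[OF assms(1)] by (auto simp: connectedin_closedin)
  have closed: "closedin X (E1 \<inter> H)" "closedin X (E2 \<inter> H)"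
    using E(1,2) assms(1) by (simp_all add: closedin_Int)
  have split: "H = (E1 \<inter> H) \<union> (E2 \<inter> H)" "(E1 \<inter> H) \<inter> (E2 \<inter> H) = {}"
    using E(3,4) by blast+
  show thesis
  proof (cases "x \<in> E1")
    case True
    show thesis
      using split closed E(6) True assms(3) by (intro that[of "E1 \<inter> H" "E2 \<inter> H"]) blast+
  next
    case False
    show thesis
      using split closed E(5) False assms(3) by (intro that[of "E2 \<inter> H" "E1 \<inter> H"]) blast+
  qed
qed

lemma null_aposyndetic_in_thick:
  assumes X: "compact_space X" "connected_space X" "Hausdorff_space X"
    and "thick X T" and x: "null_aposyndetic X x"
  shows "x \<in> T"
proof (rule ccontr)
  assume "x \<notin> T"
  have "x \<in> topspace X"
    using x by (simp add: null_aposyndetic_def)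
  have T: "closedin X T" "connectedin X T" "T \<noteq> topspace X" "X interior_of T \<noteq> {}"
    using \<open>thick X T\<close> compactin_imp_closedin[OF X(3)]
    by (simp_all add: thick_def subcontinuum_def)
  define H where "H = X closure_of (topspace X - T)"
  have H: "closedin X H" "topspace X - T \<subseteq> H" "H \<subseteq> topspace X"
    by (simp_all add: H_def closure_of_subset closure_of_subset_topspace)
  have "H \<noteq> topspace X"
    using T(4) by (simp add: H_def interior_of_closure_of)
  have "x \<in> X interior_of H"
    using interior_of_maximal[OF H(2)] T(1) \<open>x \<notin> T\<close> \<open>x \<in> topspace X\<close> by blast
  then have "\<not> connectedin X H"
    using null_aposyndetic_notin_interior_closedin[OF X(1) x H(1)] \<open>H \<noteq> topspace X\<close> by blast
  moreover have "x \<in> H"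
    using \<open>x \<in> X interior_of H\<close> interior_of_subset[of X H] by blast
  ultimately obtain H1 H2 where H12: "closedin X H1" "closedin X H2" "H = H1 \<union> H2"
      "H1 \<inter> H2 = {}" "x \<in> H1" "H2 \<noteq> {}"
    by (rule closedin_not_connectedin_split[OF H(1)])
  have cover: "topspace X = T \<union> H1 \<union> H2"
    using H(2,3) H12(3) closedin_subset[OF T(1)] by blast
  have "connectedin X (T \<union> H1)"
    using connectedin_Un_closedin_complement[OF X(2) T(2,1) H12(1,2,4) cover] .
  moreover have "closedin X (T \<union> H1)"
    using T(1) H12(1) by (rule closedin_Un)
  moreover have "T \<union> H1 \<noteq> topspace X"
  proof
    assume "T \<union> H1 = topspace X"
    then have "H \<subseteq> H1"
      unfolding H_def by (intro closure_of_minimal H12(1)) blast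
    then show False
      using H12(3,4,6) by blast
  qed
  moreover have "x \<in> X interior_of (T \<union> H1)"
  proof -
    have "openin X (topspace X - H2)"
      using H12(2) by (simp add: closedin_def)
    moreover have "topspace X - H2 \<subseteq> T \<union> H1"
      using cover by auto
    ultimately have "topspace X - H2 \<subseteq> X interior_of (T \<union> H1)"
      by (simp add: interior_of_maximal)
    then show ?thesis
      using H12(4,5) \<open>x \<in> topspace X\<close> by blast
  qed
  ultimately show False
    using null_aposyndetic_notin_interior_closedin[OF X(1) x] by blast
qed

theorem mainTheorem17:
  fixes X :: "'a topology" and T :: "'a set" and x :: 'a
  assumes "continuum X" and "thick X T" and "null_aposyndetic X x"
  shows "x \<in> X closure_of T \<inter> X closure_of (topspace X - T)"
proof -
  have X: "compact_space X" "connected_space X" "Hausdorff_space X"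
    using assms(1) by (simp_all add: continuum_def)
  have "x \<in> T"
    using null_aposyndetic_in_thick[OF X assms(2,3)] .
  moreover have "x \<in> X closure_of (topspace X - T)"
    using assms(2) null_aposyndetic_in_closure_complement[OF assms(3)] by (simp add: thick_def)
  moreover have "T \<subseteq> X closure_of T"
    using assms(2) by (simp add: closure_of_subset thick_def subcontinuum_def)
  ultimately show ?thesis
    by blast
qed

end
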